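(* For every integer $n$, \[ \sum_{k=1}^n(-1)^{k-1}F_k^{\,4}=\frac{(-1)^{n-1}}{3}F_nF_{n+1}F_{n-2}F_{n+3}\,. \]
   Context: $F_i$ denotes the Fibonacci numbers, defined for all $i\in\mathbb{Z}$ by $F_i=F_{i-1}+F_{i-2}$, $F_0=0$, $F_1=1$; equivalently $F_{-i}=(-1)^{i-1}F_i$. Summation convention for an arbitrary integer upper limit: $\sum_{k=a}^{a-1} f(k)=0$, and for $n<a-1$, $\sum_{k=a}^{n} f(k) = -\sum_{k=n+1}^{a-1} f(k)$. *)

theory Defs
  imports Complex_Main "HOL-Number_Theory.Fib"
begin

definition fibz :: "int \<Rightarrow> int" where
  "fibz i = (if 0 \<le> i then int (fib (nat i))
             else (-1) ^ (nat (-i) - 1) * int (fib (nat (-i))))"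

text \<open>Sum with arbitrary integer upper limit:
  sum_{k=a}^{n} f k = 0 if n = a-1, and = - sum_{k=n+1}^{a-1} f k if n < a-1.\<close>
definition gsum :: "int \<Rightarrow> int \<Rightarrow> (int \<Rightarrow> 'a::ab_group_add) \<Rightarrow> 'a" where
  "gsum a n f = (if a - 1 \<le> n then sum f {a..n} else - sum f {n+1..a-1})"

end

theory Submission
  imports Defs
begin

text \<open>Both sides vanish at n = 0 and have the same increment from n - 1 to n, so the identity
  is a telescoping sum over all of \<int> (the convention of gsum for upper limits below the lower
  one makes the downward steps work as well). Because the sign alternates, the increment of the
  right-hand side is (-1)^(n-1)/3 times the sum of the four-fold products at n and at n - 1; in
  terms of a = F(n-1), b = F(n) that sum is b(a+b)(b-a)(2a+3b) + ab(2a-b)(a+2b) = 3b^4.\<close>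

lemma fibz_of_nat: "fibz (int m) = int (fib m)"
  by (simp add: fibz_def)

lemma fibz_minus: "fibz (- int m) = (-1) ^ Suc m * int (fib m)"
  by (cases m) (simp_all add: fibz_def del: of_nat_Suc)

lemma fibz_rec: "fibz (i + 2) = fibz (i + 1) + fibz i"
proof -
  consider "i \<ge> 0" | "i = -1" | m where "i = - int m - 2"
  proof -
    assume *: "i = - int m - 2 \<Longrightarrow> thesis" for m
    show thesis if "i \<ge> 0 \<Longrightarrow> thesis" "i = -1 \<Longrightarrow> thesis"
      using that *[of "nat (- i - 2)"] by linarith
  qed
  then show ?thesis
  proof cases
    case 1
    then obtain m where "i = int m" by (metis nonneg_eq_int)
    then show ?thesis
      using fibz_of_nat[of "m + 2"] fibz_of_nat[of "m + 1"] fibz_of_nat[of m]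
      by (simp add: add.commute)
  next
    case 2
    then show ?thesis by (simp add: fibz_def)
  next
    case 3
    have "i + 2 = - int m" "i + 1 = - int (Suc m)" "i = - int (Suc (Suc m))"
      using 3 by simp_all
    then show ?thesis by (simp only: fibz_minus) (simp add: algebra_simps)
  qed
qed

lemma gsum_upper_step: "gsum a n f = gsum a (n - 1) f + f n"
proof -
  consider "a \<le> n" | "n = a - 1" | "n < a - 1" by linarith
  then show ?thesis
  proof cases
    case 1
    then have "{a..n} = insert n {a..n - 1}" by auto
    with 1 show ?thesis by (simp add: gsum_def add.commute)
  next
    case 2
    then show ?thesis by (simp add: gsum_def)
  next
    case 3
    then have "{n..a - 1} = insert n {n + 1..a - 1}" by auto
    with 3 show ?thesis by (simp add: gsum_def)
  qed
qed

lemma gsum_telescope: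
  assumes "g (a - 1) = 0" and "\<And>k. g k - g (k - 1) = f k"
  shows "gsum a n f = g n"
proof (induction n rule: int_induct[where k = "a - 1"])
  case base
  show ?case using assms(1) by (simp add: gsum_def)
next
  case (step1 i)
  then show ?case
    using gsum_upper_step[of a "i + 1" f] assms(2)[of "i + 1"] by (simp add: algebra_simps)
next
  case (step2 i)
  then show ?case using gsum_upper_step[of a i f] assms(2)[of i] by (simp add: algebra_simps)
qed

lemma fibz_product_sum:
  "fibz n * fibz (n + 1) * fibz (n - 2) * fibz (n + 3)
     + fibz (n - 1) * fibz n * fibz (n - 3) * fibz (n + 2) = 3 * fibz n ^ 4"
proof -
  define a b where "a = fibz (n - 1)" and "b = fibz n"
  have succ: "fibz (n + 1) = a + b"
    using fibz_rec[of "n - 1"] by (simp add: a_def b_def add.commute)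
  have succ2: "fibz (n + 2) = a + 2 * b" using fibz_rec[of n] succ by (simp add: b_def)
  have succ3: "fibz (n + 3) = 2 * a + 3 * b" using fibz_rec[of "n + 1"] succ succ2
    by (simp add: add.assoc)
  have pred2: "fibz (n - 2) = b - a" using fibz_rec[of "n - 2"] by (simp add: a_def b_def)
  have pred3: "fibz (n - 3) = 2 * a - b" using fibz_rec[of "n - 3"] pred2
    by (simp add: a_def)
  show ?thesis unfolding succ succ2 succ3 pred2 pred3 a_def[symmetric] b_def[symmetric]
    by (simp add: algebra_simps power4_eq_xxxx)
qed

theorem corollary3:
  fixes n :: int
  shows "gsum 1 n (\<lambda>k. (-1::real) powi (k - 1) * (of_int (fibz k)) ^ 4)
       = (-1::real) powi (n - 1) / 3
         * of_int (fibz n * fibz (n + 1) * fibz (n - 2) * fibz (n + 3))"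
proof (rule gsum_telescope, goal_cases)
  case 1
  show ?case by (simp add: fibz_def)
next
  case (2 k)
  let ?P = "\<lambda>j. real_of_int (fibz j * fibz (j + 1) * fibz (j - 2) * fibz (j + 3))"
  have sign: "(-1::real) powi (k - 1 - 1) = - ((-1) powi (k - 1))"
    using power_int_minus_mult[of "-1::real" "k - 1"] by simp
  have "?P k + ?P (k - 1) = 3 * real_of_int (fibz k) ^ 4"
    using arg_cong[OF fibz_product_sum[of k], of real_of_int] by (simp add: algebra_simps)
  then have "(-1) powi (k - 1) * (?P k + ?P (k - 1))
      = (-1) powi (k - 1) * (3 * real_of_int (fibz k) ^ 4)"
    by simp
  with sign show ?case by (simp add: field_simps)
qed

end
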